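(* Let $n\ge 1$ and let $\mathcal{A}\subseteq \mathcal{S}\times\mathcal{X}^n$ be a nonempty set of input pairs. The following are equivalent: (a) $d_n\big((s_0,\mathbf{x}),(\hat s_0,\hat{\mathbf{x}})\big)\le \beta$ for all $(s_0,\mathbf{x}),(\hat s_0,\hat{\mathbf{x}})\in\mathcal{A}$; (b) there exists a single sequence $\mathbf{y}_{\mathcal{A}}\in\mathbb{Z}^n$ with $\mathbf{y}_{\mathcal{A}}\in \bigcap_{(s_0,\mathbf{x})\in\mathcal{A}} \mathcal{Y}^n(s_0,\mathbf{x})$, where the feasible sets are taken with output alphabet $\mathcal{Y}=\mathbb{Z}$.
   Context: Fix integers $\alpha\ge 1$ (maximal consumption per step) and $\beta\ge 0$ (battery capacity). Let $\mathcal{X}=\{0,1,\dots,\alpha\}$ and $\mathcal{S}=\{0,1,\dots,\beta\}$. For an initial battery state $s_0\in\mathcal{S}$, a consumption sequence $\mathbf{x}=(x_0,\dots,x_{n-1})\in\mathcal{X}^n$ and a request sequence $\mathbf{y}=(y_0,\dots,y_{n-1})\in\mathbb{Z}^n$, the battery states are $s_i=s_0+\sum_{k=0}^{i-1}y_k-\sum_{k=0}^{i-1}x_k$ for $i=0,1,\dots,n$. For an output alphabet $\mathcal{Y}\subseteq\mathbb{Z}$, the set of feasible requests is $\mathcal{Y}^n(s_0,\mathbf{x})=\{\mathbf{y}\in\mathcal{Y}^n: s_i\in\{0,\dots,\beta\}\text{ for all } i=0,\dots,n\}$. The distance between two input pairs is $d_n\big((s_0,\mathbf{x}),(\hat s_0,\hat{\mathbf{x}})\big)=\max_{0\le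 i\le n-1}\big|(s_0-\sum_{k=0}^{i}x_k)-(\hat s_0-\sum_{k=0}^{i}\hat x_k)\big|$. *)

theory Defs
  imports Main
begin

definition cons_alph :: "int \<Rightarrow> int set" where
  "cons_alph alpha = {0..alpha}"

definition state_set :: "int \<Rightarrow> int set" where
  "state_set beta = {0..beta}"

definition bstate :: "int \<Rightarrow> int list \<Rightarrow> int list \<Rightarrow> nat \<Rightarrow> int" where
  "bstate s0 x y i = s0 + (\<Sum>k<i. y ! k) - (\<Sum>k<i. x ! k)"

definition feasible :: "int \<Rightarrow> int set \<Rightarrow> nat \<Rightarrow> int \<Rightarrow> int list \<Rightarrow> int list set" where
  "feasible beta Y n s0 x =
     {y. length y = n \<and> set y \<subseteq> Y \<and> (\<forall>i\<le>n. bstate s0 x y i \<in> {0..beta})}"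

definition input_pairs :: "int \<Rightarrow> int \<Rightarrow> nat \<Rightarrow> (int \<times> int list) set" where
  "input_pairs alpha beta n =
     {(s0, x). s0 \<in> state_set beta \<and> length x = n \<and> set x \<subseteq> cons_alph alpha}"

definition dist_n :: "nat \<Rightarrow> int \<times> int list \<Rightarrow> int \<times> int list \<Rightarrow> int" where
  "dist_n n p q = Max ((\<lambda>i. \<bar>(fst p - (\<Sum>k\<le>i. snd p ! k)) - (fst q - (\<Sum>k\<le>i. snd q ! k))\<bar>) ` {0..<n})"

end

theory Submission
  imports Defs
begin

text \<open>Without requests, the battery level of input pair (s0, x) after step j would be
  s0 - \<Sum>k\<le>j. x!k; a common request sequence must lift all these levels into [0, \<beta>] by the
  same cumulative amount \<Sum>k\<le>j. y!k. A set of integers admits a common shift into [0, \<beta>]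
  exactly when its diameter is at most \<beta>, and every choice of cumulative amounts is the sequence of partial sums of some
  request sequence.\<close>

definition depleted_level :: "int \<Rightarrow> int list \<Rightarrow> nat \<Rightarrow> int" where
  "depleted_level s0 x j = s0 - (\<Sum>k\<le>j. x ! k)"

lemma bstate_Suc: "bstate s0 x y (Suc j) = depleted_level s0 x j + (\<Sum>k\<le>j. y ! k)"
  unfolding bstate_def depleted_level_def by (simp add: lessThan_Suc_atMost)

lemma dist_n_le_iff:
  assumes "n \<ge> 1"
  shows "dist_n n p q \<le> b \<longleftrightarrow>
    (\<forall>j<n. \<bar>depleted_level (fst p) (snd p) j - depleted_level (fst q) (snd q) j\<bar> \<le> b)"
proof -
  have "{0..<n} \<noteq> {}" using assms by auto
  then show ?thesis
    unfolding dist_n_def depleted_level_def by auto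
qed

lemma feasible_UNIV_iff:
  assumes "s0 \<in> {0..beta}"
  shows "y \<in> feasible beta UNIV n s0 x \<longleftrightarrow>
    length y = n \<and> (\<forall>j<n. depleted_level s0 x j + (\<Sum>k\<le>j. y ! k) \<in> {0..beta})"
proof -
  have split_0_Suc: "(\<forall>i\<le>n. P i) \<longleftrightarrow> P 0 \<and> (\<forall>j<n. P (Suc j))" for P :: "nat \<Rightarrow> bool"
    by (metis Suc_le_eq le0 not0_implies_Suc)
  have "bstate s0 x y 0 = s0" by (simp add: bstate_def)
  then show ?thesis
    using assms unfolding feasible_def split_0_Suc by (simp add: bstate_Suc)
qed

lemma ex_shift_into_atLeastAtMost_iff:
  fixes S :: "int set"
  shows "(\<exists>c. \<forall>v\<in>S. v + c \<in> {0..b}) \<longleftrightarrow> (\<forall>u\<in>S. \<forall>v\<in>S. \<bar>u - v\<bar> \<le> b)"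
proof
  assume "\<exists>c. \<forall>v\<in>S. v + c \<in> {0..b}"
  then obtain c where c: "\<And>v. v \<in> S \<Longrightarrow> 0 \<le> v + c \<and> v + c \<le> b" by auto
  show "\<forall>u\<in>S. \<forall>v\<in>S. \<bar>u - v\<bar> \<le> b"
  proof (intro ballI)
    fix u v assume "u \<in> S" "v \<in> S"
    with c[of u] c[of v] show "\<bar>u - v\<bar> \<le> b" by linarith
  qed
next
  assume diam: "\<forall>u\<in>S. \<forall>v\<in>S. \<bar>u - v\<bar> \<le> b"
  show "\<exists>c. \<forall>v\<in>S. v + c \<in> {0..b}"
  proof (cases "S = {}")
    case False
    then obtain u where "u \<in> S" by blast
    with diam have "S \<subseteq> {u - b..u + b}" by fastforce
    then have "finite S" using finite_subset by blast
    with False have "Min S \<in> S" "\<forall>v\<in>S. Min S \<le> v" by auto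
    with diam show ?thesis by (intro exI[of _ "- Min S"]) fastforce
  qed simp
qed

lemma ex_list_partial_sums_iff:
  fixes P :: "nat \<Rightarrow> int \<Rightarrow> bool"
  shows "(\<exists>y. length y = n \<and> (\<forall>j<n. P j (\<Sum>k\<le>j. y ! k))) \<longleftrightarrow> (\<forall>j<n. \<exists>c. P j c)"
proof
  assume "\<forall>j<n. \<exists>c. P j c"
  then obtain Y where Y: "\<forall>j<n. P j (Y j)" by metis
  define c where "c i = (if i = 0 then 0 else Y (i - 1))" for i
  define y where "y = map (\<lambda>k. c (Suc k) - c k) [0..<n]"
  have "(\<Sum>k\<le>j. y ! k) = Y j" if "j < n" for j
  proof -
    have "(\<Sum>k\<le>j. y ! k) = (\<Sum>k<Suc j. c (Suc k) - c k)"
      using that by (auto simp: y_def lessThan_Suc_atMost intro!: sum.cong)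
    also have "\<dots> = c (Suc j) - c 0" by (rule sum_lessThan_telescope)
    finally show ?thesis by (simp add: c_def)
  qed
  with Y show "\<exists>y. length y = n \<and> (\<forall>j<n. P j (\<Sum>k\<le>j. y ! k))"
    by (intro exI[of _ y]) (simp add: y_def)
qed blast

theorem lemma1:
  fixes alpha beta :: int and n :: nat and A :: "(int \<times> int list) set"
  assumes "alpha \<ge> 1" and "beta \<ge> 0" and "n \<ge> 1"
    and "A \<subseteq> input_pairs alpha beta n" and "A \<noteq> {}"
  shows "(\<forall>p\<in>A. \<forall>q\<in>A. dist_n n p q \<le> beta) \<longleftrightarrow>
         (\<exists>y. y \<in> (\<Inter>p\<in>A. feasible beta UNIV n (fst p) (snd p)))"
proof -
  let ?L = "\<lambda>p j. depleted_level (fst p) (snd p) j"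
  have s0: "fst p \<in> {0..beta}" if "p \<in> A" for p
    using assms(4) that by (auto simp: input_pairs_def state_set_def)
  have "(\<forall>p\<in>A. \<forall>q\<in>A. dist_n n p q \<le> beta) \<longleftrightarrow>
        (\<forall>j<n. \<forall>u\<in>(\<lambda>p. ?L p j) ` A. \<forall>v\<in>(\<lambda>p. ?L p j) ` A. \<bar>u - v\<bar> \<le> beta)"
    using dist_n_le_iff[OF assms(3)] by blast
  also have "\<dots> \<longleftrightarrow> (\<forall>j<n. \<exists>c. \<forall>p\<in>A. ?L p j + c \<in> {0..beta})"
    by (simp only: ex_shift_into_atLeastAtMost_iff[symmetric]) simp
  also have "\<dots> \<longleftrightarrow> (\<exists>y. length y = n \<and> (\<forall>j<n. \<forall>p\<in>A. ?L p j + (\<Sum>k\<le>j. y ! k) \<in> {0..beta}))"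
    by (rule ex_list_partial_sums_iff[symmetric])
  also have "\<dots> \<longleftrightarrow> (\<exists>y. y \<in> (\<Inter>p\<in>A. feasible beta UNIV n (fst p) (snd p)))"
    using assms(5) feasible_UNIV_iff[OF s0] by (metis (no_types, lifting) INT_iff ex_in_conv)
  finally show ?thesis .
qed

end
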